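(* Let $n$ be a power of $2$, let $w\ge1$, and let $\mathbf{M}_1,\dots,\mathbf{M}_n$ be $w\times w$ real matrices. For every $(\ell,r)\in\mathsf{BS}_n$ with $r-\ell\ge2$ let $\mathbf{M}^{(0)}_{\ell..r}$ be a given $w\times w$ real matrix, and set $\mathbf{M}^{(0)}_{r-1..r}=\mathbf{M}_r$. Define $\mathbf{M}^{(k)}_{\ell..r}$ for all integers $k\ge0$ and $(\ell,r)\in\mathsf{BS}_n$ by the recursion in the context. Then for every integer $k\ge0$ and every $(\ell,r)\in\mathsf{BS}_n$ there is a multiset $S\subseteq\mathsf{IS}_{\ell..r}\times\{-1,+1\}$ such that (i) $\mathbf{M}^{(k)}_{\ell..r}=\sum_{(\mathsf{sq},\sigma)\in S}\sigma\,\mathbf{M}^{(0)}_{\mathsf{sq}}$; (ii) $|S|\le(r-\ell)^{2k}$; (iii) for every $(\mathsf{sq},\sigma)\in S$, the length of $\mathsf{sq}$ is at most $k\log(r-\ell)+1$.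
   Context: Logarithms are base $2$. $\mathsf{BS}_n=\{(\ell,r):\exists i,k\ge 0,\ \ell=i2^k,\ r=\ell+2^k,\ 0\le\ell<r\le n\}$. Recursion: for $(\ell,r)\in\mathsf{BS}_n$ with $r-\ell=1$, $\mathbf{M}^{(k)}_{\ell..r}=\mathbf{M}_r$ for all $k\ge0$; for $r-\ell\ge2$ and $k\ge1$, with $m=(\ell+r)/2$, $$\mathbf{M}^{(k)}_{\ell..r}=\sum_{i+j=k}\mathbf{M}^{(i)}_{\ell..m}\mathbf{M}^{(j)}_{m..r}-\sum_{i+j=k-1}\mathbf{M}^{(i)}_{\ell..m}\mathbf{M}^{(j)}_{m..r}$$ (sums over integers $i,j\ge0$). For $0\le\ell<r\le n$, $\mathsf{IS}_{\ell..r}$ is the set of increasing sequences $\mathsf{sq}=(i_0,i_1,\dots,i_h)$ with $\ell=i_0<i_1<\dots<i_h=r$; $h$ is the length of $\mathsf{sq}$. In the sequences appearing here each consecutive pair $(i_{j-1},i_j)$ lies in $\mathsf{BS}_n$, and $\mathbf{M}^{(0)}_{\mathsf{sq}}=\prod_{j=1}^h\mathbf{M}^{(0)}_{i_{j-1}..i_j}$. *)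

theory Defs
  imports "HOL-Analysis.Analysis" "HOL-Library.Multiset"
begin

type_synonym 'w rmat = "real ^ 'w ^ 'w"

definition BS :: "nat \<Rightarrow> (nat \<times> nat) set" where
  "BS n = {(l, r). \<exists>i k. l = i * 2 ^ k \<and> r = l + 2 ^ k \<and> 0 \<le> l \<and> l < r \<and> r \<le> n}"

function Mk :: "(nat \<Rightarrow> 'w::finite rmat) \<Rightarrow> (nat \<Rightarrow> nat \<Rightarrow> 'w rmat)
                   \<Rightarrow> nat \<Rightarrow> nat \<Rightarrow> nat \<Rightarrow> 'w rmat" where
  "Mk M M0 k l r =
     (if r - l \<le> 1 then M r
      else if k = 0 then M0 l r
      else (let m = (l + r) div 2 in
              (\<Sum>i\<le>k. Mk M M0 i l m ** Mk M M0 (k - i) m r)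
            - (\<Sum>i\<le>k - 1. Mk M M0 i l m ** Mk M M0 (k - 1 - i) m r)))"
  by pat_completeness auto
termination
  by (relation "Wellfounded.measure (\<lambda>(M, M0, k, l, r). r - l)") auto

text \<open>M^(0)_{l..r}: equals M_r when r - l = 1, and the given matrix otherwise.\<close>
definition M0blk :: "(nat \<Rightarrow> 'w::finite rmat) \<Rightarrow> (nat \<Rightarrow> nat \<Rightarrow> 'w rmat)
                   \<Rightarrow> nat \<Rightarrow> nat \<Rightarrow> 'w rmat" where
  "M0blk M M0 l r = Mk M M0 0 l r"

definition IS :: "nat \<Rightarrow> nat \<Rightarrow> nat list set" where
  "IS l r = {sq. sq \<noteq> [] \<and> hd sq = l \<and> last sq = r \<and> sorted_wrt (<) sq}"

definition seq_len :: "nat list \<Rightarrow> nat" where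
  "seq_len sq = length sq - 1"

definition M0seq :: "(nat \<Rightarrow> 'w::finite rmat) \<Rightarrow> (nat \<Rightarrow> nat \<Rightarrow> 'w rmat)
                   \<Rightarrow> nat list \<Rightarrow> 'w rmat" where
  "M0seq M M0 sq = foldr (\<lambda>(a, b) acc. M0blk M M0 a b ** acc) (zip sq (tl sq)) (mat 1)"

end

(*
  At the midpoint m the recursion writes
  M^(k)_{l..r} as a signed sum of 2k + 1 products M^(i)_{l..m} M^(j)_{m..r} with i + j <= k;
  multiplying the expansions of the two halves term by term, and concatenating the sequences
  at m, expands the whole block. With d = m - l there are at most (2k + 1) d^(2k) <= (2d)^(2k)
  terms, and a concatenated sequence has length at most (i + j) log d + 2 <= k log (2d) + 1
  because k >= 1.
*)

theory Submission
  imports Defs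
begin

declare Mk.simps [simp del]

lemma matrix_add_rdistrib: "((A::'a::semiring_1^'n^'m) + B) ** C = A ** C + B ** C"
  by (vector matrix_matrix_mult_def sum.distrib[symmetric] field_simps)

definition seq_join :: "nat list \<Rightarrow> nat list \<Rightarrow> nat list" where
  "seq_join xs ys = xs @ tl ys"

lemma seq_join_eq_butlast_append:
  "xs \<noteq> [] \<Longrightarrow> ys \<noteq> [] \<Longrightarrow> last xs = hd ys \<Longrightarrow> seq_join xs ys = butlast xs @ ys"
  by (metis append.assoc append_butlast_last_id list.collapse seq_join_def append_Cons append_Nil)

lemma zip_tl_seq_join:
  "xs \<noteq> [] \<Longrightarrow> ys \<noteq> [] \<Longrightarrow> last xs = hd ys \<Longrightarrow>
   zip (seq_join xs ys) (tl (seq_join xs ys)) = zip xs (tl xs) @ zip ys (tl ys)"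
proof (induction xs)
  case (Cons a xs)
  then show ?case
    by (cases xs; cases ys) (auto simp: seq_join_def)
qed simp

lemma seq_len_seq_join:
  "xs \<noteq> [] \<Longrightarrow> ys \<noteq> [] \<Longrightarrow> seq_len (seq_join xs ys) = seq_len xs + seq_len ys"
  by (cases xs; cases ys) (auto simp: seq_len_def seq_join_def)

lemma zip_tl_subset_iff_nth:
  "set (zip sq (tl sq)) \<subseteq> A \<longleftrightarrow> (\<forall>j < seq_len sq. (sq ! j, sq ! Suc j) \<in> A)"
  by (auto simp: seq_len_def set_zip nth_tl)

lemma seq_join_IS:
  assumes xs: "xs \<in> IS l m" and ys: "ys \<in> IS m r"
  shows "seq_join xs ys \<in> IS l r"
proof -
  have "sorted_wrt (<) (butlast xs @ [last xs])"
    using xs by (subst append_butlast_last_id) (simp_all add: IS_def)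
  then have "\<forall>x\<in>set (butlast xs). x < m" and "sorted_wrt (<) (butlast xs)"
    using xs by (simp_all add: sorted_wrt_append IS_def)
  moreover obtain ys' where ys': "ys = m # ys'" "\<forall>y\<in>set ys'. m < y" "sorted_wrt (<) ys'"
    using ys by (cases ys) (auto simp: IS_def)
  ultimately have "sorted_wrt (<) (butlast xs @ ys)"
    by (auto simp: sorted_wrt_append dest: less_trans)
  moreover have "hd (seq_join xs ys) = l" "last (seq_join xs ys) = r"
    using xs ys by (cases ys; auto simp: IS_def seq_join_def)+
  ultimately show ?thesis
    using xs ys by (simp add: IS_def seq_join_eq_butlast_append)
qed

lemma foldr_matrix_mult_acc:
  "foldr (\<lambda>(a, b) acc. (f a b :: 'a::semiring_1^'n^'n) ** acc) xs B
   = foldr (\<lambda>(a, b) acc. f a b ** acc) xs (mat 1) ** B"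
  by (induction xs) (auto simp: matrix_mul_assoc)

lemma M0seq_seq_join:
  assumes "xs \<in> IS l m" "ys \<in> IS m r"
  shows "M0seq M M0 (seq_join xs ys) = M0seq M M0 xs ** M0seq M M0 ys"
  using assms unfolding M0seq_def
  by (simp add: IS_def zip_tl_seq_join foldr_append foldr_matrix_mult_acc[where B = "foldr _ _ _"])

fun join_term :: "nat list \<times> int \<Rightarrow> nat list \<times> int \<Rightarrow> nat list \<times> int" where
  "join_term (xs, \<sigma>) (ys, \<tau>) = (seq_join xs ys, \<sigma> * \<tau>)"

definition join_terms :: "(nat list \<times> int) multiset \<Rightarrow> (nat list \<times> int) multiset
                           \<Rightarrow> (nat list \<times> int) multiset" where
  "join_terms S T = (\<Sum>x\<in>#S. image_mset (join_term x) T)"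

definition negate_terms :: "(nat list \<times> int) multiset \<Rightarrow> (nat list \<times> int) multiset" where
  "negate_terms S = image_mset (apsnd uminus) S"

lemma in_join_terms:
  "z \<in># join_terms S T \<longleftrightarrow> (\<exists>x\<in>#S. \<exists>y\<in>#T. z = join_term x y)"
  by (induction S) (auto simp: join_terms_def simp del: join_term.simps)

lemma size_join_terms: "size (join_terms S T) = size S * size T"
  by (induction S) (auto simp: join_terms_def)

lemma size_negate_terms: "size (negate_terms S) = size S"
  by (simp add: negate_terms_def)

definition signed_sum :: "(nat \<Rightarrow> 'w::finite rmat) \<Rightarrow> (nat \<Rightarrow> nat \<Rightarrow> 'w rmat)
                            \<Rightarrow> (nat list \<times> int) multiset \<Rightarrow> 'w rmat" where
  "signed_sum M M0 S = (\<Sum>(sq, \<sigma>) \<in># S. of_int \<sigma> *\<^sub>R M0seq M M0 sq)"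

lemma signed_sum_add: "signed_sum M M0 (S + T) = signed_sum M M0 S + signed_sum M M0 T"
  by (simp add: signed_sum_def)

lemma signed_sum_sum: "signed_sum M M0 (\<Sum>i\<in>I. F i) = (\<Sum>i\<in>I. signed_sum M M0 (F i))"
  using sum_comp_morphism[of "signed_sum M M0" F I]
  by (simp add: signed_sum_add signed_sum_def comp_def)

lemma signed_sum_negate_terms: "signed_sum M M0 (negate_terms S) = - signed_sum M M0 S"
  by (induction S) (auto simp: signed_sum_def negate_terms_def)

lemma signed_sum_join_terms:
  assumes "\<forall>(xs, \<sigma>) \<in># S. xs \<in> IS l m" "\<forall>(ys, \<tau>) \<in># T. ys \<in> IS m r"
  shows "signed_sum M M0 (join_terms S T) = signed_sum M M0 S ** signed_sum M M0 T"
proof -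
  have image: "signed_sum M M0 (image_mset (join_term (xs, \<sigma>)) T)
      = (of_int \<sigma> *\<^sub>R M0seq M M0 xs) ** signed_sum M M0 T" if "xs \<in> IS l m" for xs \<sigma>
    using assms(2)
  proof (induction T)
    case (add y T)
    obtain ys \<tau> where y: "y = (ys, \<tau>)" by fastforce
    with add.prems have "ys \<in> IS m r" by simp
    then have "M0seq M M0 (seq_join xs ys) = M0seq M M0 xs ** M0seq M M0 ys"
      by (rule M0seq_seq_join[OF that])
    with add y show ?case
      by (simp add: signed_sum_def matrix_add_ldistrib matrix_scalar_ac scalar_matrix_assoc
          mult.commute)
  qed (simp add: signed_sum_def)
  show ?thesis
    using assms(1)
  proof (induction S)
    case (add x S)
    then show ?case
      using image by (auto simp: join_terms_def signed_sum_add matrix_add_rdistrib signed_sum_def)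
  qed (simp add: join_terms_def signed_sum_def)
qed

lemma Mk_eq_M0seq_pair: "r - l \<le> 1 \<or> k = 0 \<Longrightarrow> Mk M M0 k l r = M0seq M M0 [l, r]"
  unfolding M0seq_def M0blk_def by (subst (1 2) Mk.simps) auto

lemma BS_halves:
  assumes "(l, r) \<in> BS n" "2 \<le> r - l"
  obtains h where "(l, l + h) \<in> BS n" "(l + h, r) \<in> BS n" "r = l + 2 * h"
proof -
  obtain i j where ij: "l = i * 2 ^ j" "r = l + 2 ^ j" "r \<le> n"
    using assms(1) by (auto simp: BS_def)
  with assms(2) obtain j' where j': "j = Suc j'"
    by (cases j) auto
  have halves: "l = (2 * i) * 2 ^ j'" "l + 2 ^ j' = (2 * i + 1) * 2 ^ j'" "r = (l + 2 ^ j') + 2 ^ j'"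
    "l < l + 2 ^ j'" "l + 2 ^ j' < r" "l + 2 ^ j' \<le> n" "r \<le> n"
    using ij j' by simp_all
  then have "(l, l + 2 ^ j') \<in> BS n"
    unfolding BS_def by blast
  moreover from halves have "(l + 2 ^ j', r) \<in> BS n"
    unfolding BS_def by blast
  ultimately show thesis
    using that ij j' by simp
qed

definition admissible_term :: "nat \<Rightarrow> nat \<Rightarrow> nat \<Rightarrow> real \<Rightarrow> nat list \<times> int \<Rightarrow> bool" where
  "admissible_term n l r h x \<longleftrightarrow> fst x \<in> IS l r \<and> set (zip (fst x) (tl (fst x))) \<subseteq> BS n
     \<and> snd x \<in> {-1, 1} \<and> real (seq_len (fst x)) \<le> h"

lemma admissible_term_mono: "admissible_term n l r h x \<Longrightarrow> h \<le> h' \<Longrightarrow> admissible_term n l r h' x"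
  by (auto simp: admissible_term_def)

lemma admissible_negate_terms:
  "\<forall>x\<in>#S. admissible_term n l r h x \<Longrightarrow> \<forall>x\<in>#negate_terms S. admissible_term n l r h x"
  by (auto simp: admissible_term_def negate_terms_def)

lemma admissible_join_term:
  assumes "admissible_term n l m h x" "admissible_term n m r h' y"
  shows "admissible_term n l r (h + h') (join_term x y)"
proof -
  obtain xs \<sigma> ys \<tau> where xy: "x = (xs, \<sigma>)" "y = (ys, \<tau>)"
    by fastforce
  with assms have "xs \<noteq> []" "ys \<noteq> []" "last xs = hd ys"
    by (auto simp: admissible_term_def IS_def)
  with assms xy show ?thesis
    by (auto simp: admissible_term_def seq_join_IS zip_tl_seq_join seq_len_seq_join)
qed

definition convolution :: "nat \<Rightarrow> (nat \<Rightarrow> (nat list \<times> int) multiset)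
                             \<Rightarrow> (nat \<Rightarrow> (nat list \<times> int) multiset) \<Rightarrow> (nat list \<times> int) multiset" where
  "convolution k SL SR = (\<Sum>i\<le>k. join_terms (SL i) (SR (k - i)))"

lemma signed_sum_convolution:
  assumes "\<forall>i. \<forall>(xs, \<sigma>) \<in># SL i. xs \<in> IS l m" "\<forall>j. \<forall>(ys, \<tau>) \<in># SR j. ys \<in> IS m r"
  shows "signed_sum M M0 (convolution k SL SR)
           = (\<Sum>i\<le>k. signed_sum M M0 (SL i) ** signed_sum M M0 (SR (k - i)))"
  unfolding convolution_def signed_sum_sum
  using assms by (intro sum.cong refl signed_sum_join_terms) auto

lemma size_convolution_le:
  fixes d :: real
  assumes "\<And>i. real (size (SL i)) \<le> d ^ (2 * i)" "\<And>j. real (size (SR j)) \<le> d ^ (2 * j)"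
  shows "real (size (convolution k SL SR)) \<le> real (k + 1) * d ^ (2 * k)"
proof -
  have "real (size (SL i)) * real (size (SR (k - i))) \<le> d ^ (2 * k)" if "i \<le> k" for i
  proof -
    have "real (size (SL i)) * real (size (SR (k - i))) \<le> d ^ (2 * i) * d ^ (2 * (k - i))"
      using assms by (intro mult_mono) (auto simp: zero_le_even_power)
    also have "\<dots> = d ^ (2 * k)"
      using that by (metis add_mult_distrib2 le_add_diff_inverse power_add)
    finally show ?thesis .
  qed
  then have "(\<Sum>i\<le>k. real (size (SL i)) * real (size (SR (k - i)))) \<le> (\<Sum>i\<le>k. d ^ (2 * k))"
    by (intro sum_mono) auto
  then show ?thesis
    by (simp add: convolution_def size_join_terms)
qed

lemma admissible_convolution:
  assumes "\<And>i. \<forall>x\<in>#SL i. admissible_term n l m (real i * L + 1) x"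
    and "\<And>j. \<forall>y\<in>#SR j. admissible_term n m r (real j * L + 1) y"
  shows "\<forall>z\<in>#convolution k SL SR. admissible_term n l r (real k * L + 2) z"
proof
  fix z assume "z \<in># convolution k SL SR"
  then obtain i x y where "i \<le> k" "x \<in># SL i" "y \<in># SR (k - i)" "z = join_term x y"
    by (auto simp: convolution_def set_mset_sum in_join_terms simp del: join_term.simps)
  then have "admissible_term n l r ((real i * L + 1) + (real (k - i) * L + 1)) z"
    using assms by (blast intro: admissible_join_term)
  moreover have "(real i * L + 1) + (real (k - i) * L + 1) = real k * L + 2"
    using \<open>i \<le> k\<close> by (simp add: of_nat_diff algebra_simps)
  ultimately show "admissible_term n l r (real k * L + 2) z"
    by simp
qed

lemma one_plus_two_mult_le_four_power: "2 * k + 1 \<le> (4::nat) ^ k"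
  by (induction k) auto

definition split_expansion :: "nat \<Rightarrow> (nat \<Rightarrow> (nat list \<times> int) multiset)
                                 \<Rightarrow> (nat \<Rightarrow> (nat list \<times> int) multiset) \<Rightarrow> (nat list \<times> int) multiset" where
  "split_expansion k SL SR = convolution k SL SR + negate_terms (convolution (k - 1) SL SR)"

lemma signed_sum_split_expansion:
  assumes "\<forall>i. \<forall>(xs, \<sigma>) \<in># SL i. xs \<in> IS l m" "\<forall>j. \<forall>(ys, \<tau>) \<in># SR j. ys \<in> IS m r"
  shows "signed_sum M M0 (split_expansion k SL SR)
           = (\<Sum>i\<le>k. signed_sum M M0 (SL i) ** signed_sum M M0 (SR (k - i)))
             - (\<Sum>i\<le>k - 1. signed_sum M M0 (SL i) ** signed_sum M M0 (SR (k - 1 - i)))"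
  unfolding split_expansion_def signed_sum_add signed_sum_negate_terms signed_sum_convolution[OF assms]
  by simp

lemma size_split_expansion_le:
  fixes d :: real
  assumes "1 \<le> d" "1 \<le> k"
    and "\<And>i. real (size (SL i)) \<le> d ^ (2 * i)" "\<And>j. real (size (SR j)) \<le> d ^ (2 * j)"
  shows "real (size (split_expansion k SL SR)) \<le> (2 * d) ^ (2 * k)"
proof -
  have "real (size (split_expansion k SL SR))
          = real (size (convolution k SL SR)) + real (size (convolution (k - 1) SL SR))"
    by (simp add: split_expansion_def size_negate_terms)
  also have "\<dots> \<le> real (k + 1) * d ^ (2 * k) + real (k - 1 + 1) * d ^ (2 * (k - 1))"
    using assms(3,4) by (intro add_mono size_convolution_le)
  also have "\<dots> \<le> real (k + 1) * d ^ (2 * k) + real k * d ^ (2 * k)"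
    using assms(1,2) by (simp add: mult_left_mono power_increasing)
  also have "\<dots> = real (2 * k + 1) * d ^ (2 * k)"
    by (simp add: algebra_simps)
  also have "\<dots> \<le> real (4 ^ k) * d ^ (2 * k)"
    using assms(1) one_plus_two_mult_le_four_power[of k]
    by (intro mult_right_mono) (auto simp del: of_nat_power)
  also have "\<dots> = (2 * d) ^ (2 * k)"
    by (simp add: power_mult_distrib power_mult)
  finally show ?thesis .
qed

lemma admissible_split_expansion:
  assumes "1 \<le> k" "0 \<le> L"
    and "\<And>i. \<forall>x\<in>#SL i. admissible_term n l m (real i * L + 1) x"
    and "\<And>j. \<forall>y\<in>#SR j. admissible_term n m r (real j * L + 1) y"
  shows "\<forall>x\<in>#split_expansion k SL SR. admissible_term n l r (real k * (L + 1) + 1) x"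
proof -
  have "real k * L + 2 \<le> real k * (L + 1) + 1" "real (k - 1) * L + 2 \<le> real k * (L + 1) + 1"
    using assms(1,2) by (simp_all add: of_nat_diff algebra_simps mult_left_mono)
  with admissible_convolution[OF assms(3,4)]
  have "\<forall>x\<in>#convolution k SL SR. admissible_term n l r (real k * (L + 1) + 1) x"
    "\<forall>x\<in>#convolution (k - 1) SL SR. admissible_term n l r (real k * (L + 1) + 1) x"
    by (metis admissible_term_mono)+
  then show ?thesis
    unfolding split_expansion_def using admissible_negate_terms by (metis union_iff)
qed

definition signed_expansion :: "(nat \<Rightarrow> 'w::finite rmat) \<Rightarrow> (nat \<Rightarrow> nat \<Rightarrow> 'w rmat) \<Rightarrow> nat
                                  \<Rightarrow> nat \<Rightarrow> nat \<Rightarrow> nat \<Rightarrow> (nat list \<times> int) multiset \<Rightarrow> bool" where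
  "signed_expansion M M0 n k l r S \<longleftrightarrow> Mk M M0 k l r = signed_sum M M0 S
     \<and> real (size S) \<le> real (r - l) ^ (2 * k)
     \<and> (\<forall>x\<in>#S. admissible_term n l r (real k * log 2 (real (r - l)) + 1) x)"

lemma signed_expansion_base:
  assumes "(l, r) \<in> BS n" "r - l \<le> 1 \<or> k = 0"
  shows "signed_expansion M M0 n k l r {#([l, r], 1)#}"
proof -
  have "l < r"
    using assms(1) by (auto simp: BS_def)
  then have "admissible_term n l r (real k * log 2 (real (r - l)) + 1) ([l, r], 1)"
    using assms(1) by (simp add: admissible_term_def IS_def seq_len_def)
  moreover have "1 \<le> real (r - l) ^ (2 * k)"
    using \<open>l < r\<close> by (simp add: one_le_power)
  ultimately show ?thesis
    using assms(2) by (simp add: signed_expansion_def signed_sum_def Mk_eq_M0seq_pair)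
qed

lemma signed_expansion_split:
  assumes "1 \<le> k" "1 \<le> h" "r = l + 2 * h"
    and SL: "\<And>i. signed_expansion M M0 n i l (l + h) (SL i)"
    and SR: "\<And>j. signed_expansion M M0 n j (l + h) r (SR j)"
  shows "signed_expansion M M0 n k l r (split_expansion k SL SR)"
proof -
  define L where "L = log 2 (real h)"
  have "0 \<le> L" "log 2 (real (r - l)) = L + 1"
    using assms(2,3) by (simp_all add: L_def log_mult)
  have SL_adm: "\<forall>x\<in>#SL i. admissible_term n l (l + h) (real i * L + 1) x" for i
    using SL[of i] by (simp add: signed_expansion_def L_def)
  have SR_adm: "\<forall>y\<in>#SR j. admissible_term n (l + h) r (real j * L + 1) y" for j
    using SR[of j] assms(3) by (simp add: signed_expansion_def L_def)
  have "\<forall>i. \<forall>(xs, \<sigma>) \<in># SL i. xs \<in> IS l (l + h)" "\<forall>j. \<forall>(ys, \<tau>) \<in># SR j. ys \<in> IS (l + h) r"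
    using SL_adm SR_adm by (force simp: admissible_term_def)+
  then have "Mk M M0 k l r = signed_sum M M0 (split_expansion k SL SR)"
    using SL SR assms(1-3)
    by (subst Mk.simps) (simp add: signed_sum_split_expansion signed_expansion_def)
  moreover have "real (size (split_expansion k SL SR)) \<le> real (r - l) ^ (2 * k)"
    using size_split_expansion_le[of "real h" k SL SR] SL SR assms
    by (simp add: signed_expansion_def)
  ultimately show ?thesis
    using admissible_split_expansion[OF assms(1) \<open>0 \<le> L\<close> SL_adm SR_adm]
      \<open>log 2 (real (r - l)) = L + 1\<close>
    by (simp add: signed_expansion_def)
qed

lemma Mk_signed_expansion:
  assumes "(l, r) \<in> BS n"
  shows "\<exists>S. signed_expansion M M0 n k l r S"
  using assms
proof (induction "r - l" arbitrary: l r k rule: less_induct)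
  case less
  show ?case
  proof (cases "r - l \<le> 1 \<or> k = 0")
    case True
    then show ?thesis
      using signed_expansion_base[OF less.prems] by blast
  next
    case False
    then have "1 \<le> k" "2 \<le> r - l"
      by auto
    obtain h where h: "(l, l + h) \<in> BS n" "(l + h, r) \<in> BS n" "r = l + 2 * h"
      by (rule BS_halves[OF less.prems \<open>2 \<le> r - l\<close>])
    then have "1 \<le> h"
      using \<open>2 \<le> r - l\<close> by simp
    have "l + h - l < r - l" "r - (l + h) < r - l"
      using h(3) \<open>1 \<le> h\<close> by simp_all
    then obtain SL SR where "\<And>i. signed_expansion M M0 n i l (l + h) (SL i)"
      "\<And>j. signed_expansion M M0 n j (l + h) r (SR j)"
      using less.hyps[OF _ h(1)] less.hyps[OF _ h(2)] by metis
    then show ?thesis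
      using signed_expansion_split[OF \<open>1 \<le> k\<close> \<open>1 \<le> h\<close> h(3)] by blast
  qed
qed

theorem lemma3p10:
  fixes n :: nat and M :: "nat \<Rightarrow> real ^ 'w::finite ^ 'w"
    and M0 :: "nat \<Rightarrow> nat \<Rightarrow> real ^ 'w ^ 'w"
  assumes "\<exists>p. n = 2 ^ p"
  shows "\<forall>k. \<forall>(l, r) \<in> BS n. \<exists>S :: (nat list \<times> int) multiset.
           (\<forall>(sq, \<sigma>) \<in> set_mset S. sq \<in> IS l r \<and> \<sigma> \<in> {-1, 1}
               \<and> (\<forall>j < seq_len sq. (sq ! j, sq ! Suc j) \<in> BS n)) \<and>
           Mk M M0 k l r = (\<Sum>(sq, \<sigma>) \<in># S. of_int \<sigma> *\<^sub>R M0seq M M0 sq) \<and>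
           real (size S) \<le> real (r - l) ^ (2 * k) \<and>
           (\<forall>(sq, \<sigma>) \<in> set_mset S. real (seq_len sq) \<le> real k * log 2 (real (r - l)) + 1)"
proof (intro allI ballI, clarify, goal_cases)
  case (1 k l r)
  then obtain S where "signed_expansion M M0 n k l r S"
    using Mk_signed_expansion by blast
  then show ?case
    by (intro exI[of _ S])
      (auto simp: signed_expansion_def admissible_term_def signed_sum_def zip_tl_subset_iff_nth)
qed

end
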